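(* Let $M$ be a smooth compact manifold with distance $d$ induced by a Riemannian metric, and let $\omega:\Lambda\times M\to M$ be an IFS. For every $\Delta>0$ there exists $\delta>0$ such that if $\{x_0,\dots,x_n\}$ is a finite $\delta$-chain with sequence of parameters $\sigma=(\lambda_1,\dots,\lambda_n)$, then there exist an IFS $\tilde\omega:\tilde\Lambda\times M\to M$ with $d_H(\omega,\tilde\omega)<\Delta$ and a sequence $\tilde\sigma=(\tilde\lambda_1,\dots,\tilde\lambda_n)$ in $\tilde\Lambda$ such that $(\sigma,\tilde\sigma)$ is $\Delta$-compatible and $d(\tilde\omega_{\tilde\sigma_k}(x_0),x_k)<\Delta$ for $k=0,\dots,n$.
   Context: An IFS with phase space $M$ is given by a compact metric space $\Lambda$ (parameter space) and a continuous map $\omega:\Lambda\times M\to M$; write $\omega_\lambda=\omega(\lambda,\cdot)$. $d_{C^0}(f,g)=\max_x d(f(x),g(x))$ on continuous self-maps of $M$; $d_H(\omega,\tilde\omega)$ is the Hausdorff distance with respect to $d_{C^0}$ between the sets $\{\omega_\lambda:\lambda\in\Lambda\}$ and $\{\tilde\omega_\lambda:\lambda\in\tilde\Lambda\}$. A finite sequence $\{x_0,\dots,x_n\}$ is a finite $\delta$-chain with sequence of parameters $(\lambda_1,\dots,\lambda_n)$ if $d(x_k,\omega_{\lambda_k}(x_{k-1}))\le\delta$ for $k=1,\dots,n$. For a sequence $\tilde\sigma=(\tilde\lambda_1,\dots)$, $\tilde\omega_{\tilde\sigma_0}=\mathrm{id}$ and $\tilde\omega_{\tilde\sigma_k}=\tilde\omega_{\tilde\lambda_k}\circ\cdots\circ\tilde\omega_{\tilde\lambda_1}$.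 Sequences $\sigma=(\lambda_k)$ in $\Lambda$ and $\tilde\sigma=(\tilde\lambda_k)$ in $\tilde\Lambda$ of the same length form a $\Delta$-compatible pair if $d_{C^0}(\omega_{\lambda_k},\tilde\omega_{\tilde\lambda_k})<\Delta$ for all $k$. *)

theory Defs
  imports "HOL-Analysis.Analysis"
begin

fun Ck :: "nat \<Rightarrow> 'a::euclidean_space set \<Rightarrow> ('a \<Rightarrow> 'b::real_normed_vector) \<Rightarrow> bool" where
  "Ck 0 S f = continuous_on S f"
| "Ck (Suc k) S f = (continuous_on S f \<and>
     (\<exists>D. (\<forall>i\<in>Basis. \<forall>x\<in>S. ((\<lambda>t. f (x + t *\<^sub>R i)) has_vector_derivative D i x) (at 0))
          \<and> (\<forall>i\<in>Basis. Ck k S (D i))))"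

definition smooth_on :: "'a::euclidean_space set \<Rightarrow> ('a \<Rightarrow> 'b::real_normed_vector) \<Rightarrow> bool" where
  "smooth_on S f \<longleftrightarrow> (\<forall>k. Ck k S f)"

(* smooth embedded submanifold of a Euclidean space (slice charts), of some fixed dimension m *)
definition smooth_submanifold :: "'a::euclidean_space set \<Rightarrow> bool" where
  "smooth_submanifold M \<longleftrightarrow> (\<exists>m. \<forall>p\<in>M. \<exists>U V (\<phi>::'a\<Rightarrow>'a) \<psi> B.
      open U \<and> p \<in> U \<and> open V \<and> B \<subseteq> Basis \<and> card B = m \<and>
      smooth_on U \<phi> \<and> smooth_on V \<psi> \<and> \<phi> ` U = V \<and>
      (\<forall>x\<in>U. \<psi> (\<phi> x) = x) \<and> (\<forall>y\<in>V. \<phi> (\<psi> y) = y) \<and>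
      \<phi> ` (U \<inter> M) = V \<inter> span B)"

(* Riemannian (intrinsic length) distance on M induced by the Euclidean metric;
   = \<infinity> between different components *)
definition riem_dist :: "'a::euclidean_space set \<Rightarrow> 'a \<Rightarrow> 'a \<Rightarrow> ereal" where
  "riem_dist M x y = Inf {ereal (integral {0..1} (\<lambda>t. norm (vector_derivative g (at t)))) | g.
      g piecewise_C1_differentiable_on {0..1} \<and>
      (\<lambda>t. norm (vector_derivative g (at t))) integrable_on {0..1} \<and>
      g ` {0..1} \<subseteq> M \<and> g 0 = x \<and> g 1 = y}"

definition IFS :: "'l::metric_space set \<Rightarrow> 'a::topological_space set \<Rightarrow> ('l \<Rightarrow> 'a \<Rightarrow> 'a) \<Rightarrow> bool" where
  "IFS \<Lambda> M \<omega> \<longleftrightarrow> compact \<Lambda> \<and> continuous_on (\<Lambda> \<times> M) (\<lambda>(l, x). \<omega> l x) \<and>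
     (\<forall>l\<in>\<Lambda>. \<forall>x\<in>M. \<omega> l x \<in> M)"

definition dC0 :: "('a \<Rightarrow> 'a \<Rightarrow> ereal) \<Rightarrow> 'a set \<Rightarrow> ('a \<Rightarrow> 'a) \<Rightarrow> ('a \<Rightarrow> 'a) \<Rightarrow> ereal" where
  "dC0 d M f g = (SUP x\<in>M. d (f x) (g x))"

definition dH :: "('a \<Rightarrow> 'a \<Rightarrow> ereal) \<Rightarrow> 'a set \<Rightarrow> 'l set \<Rightarrow> ('l \<Rightarrow> 'a \<Rightarrow> 'a) \<Rightarrow> 'm set \<Rightarrow> ('m \<Rightarrow> 'a \<Rightarrow> 'a) \<Rightarrow> ereal" where
  "dH d M \<Lambda> \<omega> \<Lambda>' \<omega>' = max (SUP l\<in>\<Lambda>. INF l'\<in>\<Lambda>'. dC0 d M (\<omega> l) (\<omega>' l'))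
                             (SUP l'\<in>\<Lambda>'. INF l\<in>\<Lambda>. dC0 d M (\<omega> l) (\<omega>' l'))"

fun comp_seq :: "('l \<Rightarrow> 'a \<Rightarrow> 'a) \<Rightarrow> (nat \<Rightarrow> 'l) \<Rightarrow> nat \<Rightarrow> 'a \<Rightarrow> 'a" where
  "comp_seq \<omega> \<sigma> 0 = id"
| "comp_seq \<omega> \<sigma> (Suc k) = \<omega> (\<sigma> (Suc k)) \<circ> comp_seq \<omega> \<sigma> k"

end

theory Submission
  imports Defs
begin

(* If x_k is delta-close to omega_k(x_(k-1)), a small perturbation of omega_k supported in a
   chart moves omega_k(x_(k-1)) exactly onto x_k. By compactness (Lebesgue number lemma) the
   size of such perturbations is controlled uniformly, using that in a chart Euclidean and
   Riemannian distances are comparable. The new IFS consists of a finite net of the maps of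
   omega, which keeps it Hausdorff-close to omega, together with the n perturbed maps; along
   the parameters of the perturbed maps the chain is an exact orbit. *)

section \<open>Path length and the Riemannian distance\<close>

definition path_length :: "(real \<Rightarrow> 'a::euclidean_space) \<Rightarrow> real" where
  "path_length g = integral {0..1} (\<lambda>t. norm (vector_derivative g (at t)))"

definition admissible_path :: "'a::euclidean_space set \<Rightarrow> (real \<Rightarrow> 'a) \<Rightarrow> 'a \<Rightarrow> 'a \<Rightarrow> bool" where
  "admissible_path M g x y \<longleftrightarrow> g piecewise_C1_differentiable_on {0..1} \<and>
      (\<lambda>t. norm (vector_derivative g (at t))) integrable_on {0..1} \<and>
      g ` {0..1} \<subseteq> M \<and> g 0 = x \<and> g 1 = y"

lemma riem_dist_le_path_length:
  "admissible_path M g x y \<Longrightarrow> riem_dist M x y \<le> ereal (path_length g)"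
  unfolding riem_dist_def admissible_path_def path_length_def
  by (rule Inf_lower) blast

lemma ereal_le_riem_dist:
  "(\<And>g. admissible_path M g x y \<Longrightarrow> c \<le> path_length g) \<Longrightarrow> ereal c \<le> riem_dist M x y"
  unfolding riem_dist_def
  by (rule Inf_greatest) (auto simp: admissible_path_def path_length_def)

lemma dist_le_path_length:
  assumes "admissible_path M g x y"
  shows "dist x y \<le> path_length g"
proof -
  from assms obtain S where S: "finite S" "g C1_differentiable_on ({0..1} - S)"
    and cont: "continuous_on {0..1} g"
    and int: "(\<lambda>t. norm (vector_derivative g (at t))) integrable_on {0..1}"
    and ends: "g 0 = x" "g 1 = y"
    by (auto simp: admissible_path_def piecewise_C1_differentiable_on_def)
  have "((\<lambda>t. vector_derivative g (at t)) has_integral (y - x)) {0..1}"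
    unfolding ends[symmetric]
  proof (rule fundamental_theorem_of_calculus_interior_strong[OF S(1)])
    fix t assume "t \<in> {0<..<1} - S"
    with S(2) show "(g has_vector_derivative vector_derivative g (at t)) (at t)"
      by (auto simp: C1_differentiable_on_eq vector_derivative_works)
  qed (use cont in auto)
  then have "norm (y - x) \<le> path_length g"
    unfolding path_length_def
    by (metis integral_norm_bound_integral integral_unique has_integral_integrable int order.refl)
  then show ?thesis
    by (simp add: dist_norm norm_minus_commute)
qed

lemma dist_le_riem_dist: "ereal (dist x y) \<le> riem_dist M x y"
  by (rule ereal_le_riem_dist) (rule dist_le_path_length)

lemma admissible_path_const:
  "x \<in> M \<Longrightarrow> admissible_path M (\<lambda>t. x) x x \<and> path_length (\<lambda>t. x) = 0"
  by (auto simp: admissible_path_def path_length_def vector_derivative_const_at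
      piecewise_C1_differentiable_const)

lemma riem_dist_self: "x \<in> M \<Longrightarrow> riem_dist M x x \<le> 0"
  using riem_dist_le_path_length[of M "\<lambda>t. x" x x] admissible_path_const[of x M]
  by (simp add: zero_ereal_def)

lemma vector_derivative_joinpaths_left:
  assumes "z < 1/2" and "g1 differentiable at (2 * z)"
  shows "vector_derivative (g1 +++ g2) (at z) = 2 *\<^sub>R vector_derivative g1 (at (2 * z))"
proof (rule vector_derivative_at [OF has_vector_derivative_transform_within])
  show "0 < \<bar>z - 1/2\<bar>"
    using assms(1) by simp
  have "((*) 2 has_vector_derivative 2) (at z)"
    by (auto intro!: derivative_eq_intros)
  with assms(2) show "((\<lambda>x. g1 (2 * x)) has_vector_derivative 2 *\<^sub>R vector_derivative g1 (at (2 * z))) (at z)"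
    by (intro vector_diff_chain_at [simplified o_def]) (auto simp: vector_derivative_works)
qed (use assms(1) in \<open>auto simp: joinpaths_def dist_real_def abs_if split: if_split_asm\<close>)

lemma vector_derivative_joinpaths_right:
  assumes "1/2 < z" and "g2 differentiable at (2 * z - 1)"
  shows "vector_derivative (g1 +++ g2) (at z) = 2 *\<^sub>R vector_derivative g2 (at (2 * z - 1))"
proof (rule vector_derivative_at [OF has_vector_derivative_transform_within])
  show "0 < \<bar>z - 1/2\<bar>"
    using assms(1) by simp
  have "((\<lambda>x. 2 * x - 1) has_vector_derivative 2) (at z)"
    by (auto intro!: derivative_eq_intros)
  with assms(2) show "((\<lambda>x. g2 (2 * x - 1)) has_vector_derivative 2 *\<^sub>R vector_derivative g2 (at (2 * z - 1))) (at z)"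
    by (intro vector_diff_chain_at [simplified o_def]) (auto simp: vector_derivative_works)
qed (use assms(1) in \<open>auto simp: joinpaths_def dist_real_def abs_if split: if_split_asm\<close>)

lemma has_integral_speed_joinpaths_left:
  assumes "valid_path g1" and "((\<lambda>t. norm (vector_derivative g1 (at t))) has_integral l) {0..1}"
  shows "((\<lambda>t. norm (vector_derivative (g1 +++ g2) (at t))) has_integral l) {0..1/2}"
proof -
  obtain s where s: "finite s" "\<forall>x\<in>{0..1} - s. g1 differentiable at x"
    using assms(1) by (auto simp: valid_path_def piecewise_C1_differentiable_on_def C1_differentiable_on_eq)
  have "((\<lambda>t. 2 * norm (vector_derivative g1 (at (2 * t)))) has_integral l) {0..1/2}"
    using assms(2)[THEN has_integral_affinity01[where m=2 and c=0], THEN has_integral_mult_right[where c=2]]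
    by (simp only: image_affinity_atLeastAtMost_div_diff, simp add: mult_ac)
  then show ?thesis
  proof (rule has_integral_spike_finite[rotated 2])
    show "finite (insert (1/2) ((*) 2 -` s))"
      using s by (force intro: finite_vimageI [where h = "(*) 2"] inj_onI)
  qed (auto simp: s vector_derivative_joinpaths_left)
qed

lemma has_integral_speed_joinpaths_right:
  assumes "valid_path g2" and "((\<lambda>t. norm (vector_derivative g2 (at t))) has_integral l) {0..1}"
  shows "((\<lambda>t. norm (vector_derivative (g1 +++ g2) (at t))) has_integral l) {1/2..1}"
proof -
  obtain s where s: "finite s" "\<forall>x\<in>{0..1} - s. g2 differentiable at x"
    using assms(1) by (auto simp: valid_path_def piecewise_C1_differentiable_on_def C1_differentiable_on_eq)
  have "((\<lambda>t. 2 * norm (vector_derivative g2 (at (2 * t - 1)))) has_integral l) {1/2..1}"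
    using assms(2)[THEN has_integral_affinity01[where m=2 and c="-1"], THEN has_integral_mult_right[where c=2]]
    by (simp only: image_affinity_atLeastAtMost_div_diff, simp add: mult_ac)
  then show ?thesis
  proof (rule has_integral_spike_finite[rotated 2])
    show "finite (insert (1/2) ((\<lambda>t. 2 * t - 1) -` s))"
      using s by (force intro: finite_vimageI [where h = "\<lambda>t. 2 * t - 1"] inj_onI)
  qed (auto simp: s vector_derivative_joinpaths_right)
qed

lemma admissible_path_join:
  assumes g1: "admissible_path M g1 x y" and g2: "admissible_path M g2 y z"
  shows "admissible_path M (g1 +++ g2) x z \<and> path_length (g1 +++ g2) = path_length g1 + path_length g2"
proof -
  have v1: "valid_path g1" and v2: "valid_path g2"
    using assms by (auto simp: admissible_path_def valid_path_def)
  have "((\<lambda>t. norm (vector_derivative g1 (at t))) has_integral path_length g1) {0..1}"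
   and "((\<lambda>t. norm (vector_derivative g2 (at t))) has_integral path_length g2) {0..1}"
    using assms by (auto simp: admissible_path_def path_length_def has_integral_integral)
  from has_integral_speed_joinpaths_left[OF v1 this(1)] has_integral_speed_joinpaths_right[OF v2 this(2)]
  have "((\<lambda>t. norm (vector_derivative (g1 +++ g2) (at t))) has_integral
          (path_length g1 + path_length g2)) {0..1}"
    by (simp add: has_integral_combine [where c = "1/2"])
  moreover have "valid_path (g1 +++ g2)"
    using v1 v2 g1 g2 by (intro valid_path_join) (auto simp: admissible_path_def pathfinish_def pathstart_def)
  moreover have "(g1 +++ g2) ` {0..1} \<subseteq> M"
    using path_image_join_subset[of g1 g2] g1 g2 by (auto simp: path_image_def admissible_path_def)
  ultimately show ?thesis
    using g1 g2 unfolding admissible_path_def path_length_def valid_path_def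
    by (auto simp: joinpaths_def integral_unique has_integral_integrable)
qed

section \<open>Paths in slice charts\<close>

lemma admissible_path_coordinate_segment:
  fixes \<psi> :: "'a::euclidean_space \<Rightarrow> 'a"
  assumes der: "\<forall>x\<in>V. ((\<lambda>t. \<psi> (x + t *\<^sub>R i)) has_vector_derivative D x) (at 0)"
    and cont: "continuous_on V D"
    and seg: "\<And>t. t \<in> {0..1} \<Longrightarrow>
                c + (t * s) *\<^sub>R i \<in> V \<and> \<psi> (c + (t * s) *\<^sub>R i) \<in> M \<and> norm (D (c + (t * s) *\<^sub>R i)) \<le> K"
  shows "\<exists>g. admissible_path M g (\<psi> c) (\<psi> (c + s *\<^sub>R i)) \<and> path_length g \<le> \<bar>s\<bar> * K"
proof -
  define g where "g t = \<psi> (c + (t * s) *\<^sub>R i)" for t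
  define g' where "g' t = s *\<^sub>R D (c + (t * s) *\<^sub>R i)" for t
  have g': "(g has_vector_derivative g' t) (at t)" if t: "t \<in> {0..1}" for t
  proof -
    let ?x = "c + (t * s) *\<^sub>R i"
    have "((\<lambda>u. \<psi> (?x + u *\<^sub>R i)) has_vector_derivative D ?x) (at ((t - t) * s))"
      using der seg t by auto
    then have "((\<lambda>u. \<psi> (?x + u *\<^sub>R i)) \<circ> (\<lambda>t'. (t' - t) * s) has_vector_derivative s *\<^sub>R D ?x) (at t)"
      by (intro vector_diff_chain_at) (auto intro!: derivative_eq_intros)
    moreover have "(\<lambda>u. \<psi> (?x + u *\<^sub>R i)) \<circ> (\<lambda>t'. (t' - t) * s) = g"
      by (auto simp: g_def algebra_simps)
    ultimately show ?thesis by (simp add: g'_def)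
  qed
  have cont': "continuous_on {0..1} g'"
    unfolding g'_def
    by (intro continuous_intros continuous_on_compose2[OF cont]) (use seg in auto)
  have "g C1_differentiable_on {0..1}"
    unfolding C1_differentiable_on_def using g' cont' by blast
  moreover have vd: "vector_derivative g (at t) = g' t" if "t \<in> {0..1}" for t
    using g'[OF that] by (rule vector_derivative_at)
  moreover have int: "(\<lambda>t. norm (g' t)) integrable_on {0..1}"
    by (intro integrable_continuous_interval continuous_intros cont')
  moreover have "path_length g = integral {0..1} (\<lambda>t. norm (g' t))"
    unfolding path_length_def by (rule integral_cong) (simp add: vd)
  moreover have "integral {0..1} (\<lambda>t. norm (g' t)) \<le> integral {0..1::real} (\<lambda>t. \<bar>s\<bar> * K)"
    using int seg by (intro integral_le) (auto simp: g'_def intro!: mult_left_mono)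
  ultimately show ?thesis
    using seg unfolding admissible_path_def
    by (intro exI[of _ g]) (auto simp: g_def C1_differentiable_imp_piecewise intro: integrable_eq)
qed

lemma sum_Basis_abs_inner_le: "(\<Sum>i\<in>Basis. \<bar>w \<bullet> i\<bar>) \<le> DIM('a) * norm (w::'a::euclidean_space)"
proof -
  have "(\<Sum>i\<in>Basis. \<bar>w \<bullet> i\<bar>) \<le> (\<Sum>i\<in>(Basis::'a set). norm w)"
    by (rule sum_mono) (simp add: Basis_le_norm)
  then show ?thesis by simp
qed

lemma sum_Basis_inner_span:
  fixes w :: "'a::euclidean_space"
  assumes "B \<subseteq> Basis" "w \<in> span B"
  shows "(\<Sum>i\<in>B. (w \<bullet> i) *\<^sub>R i) = w"
proof -
  have "(w \<bullet> i) *\<^sub>R i = 0" if "i \<in> Basis - B" for i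
  proof -
    have "orthogonal i w"
      by (rule orthogonal_to_span[OF assms(2)])
        (use that assms(1) in \<open>auto simp: orthogonal_def intro: inner_not_same_Basis\<close>)
    then show ?thesis by (simp add: orthogonal_def inner_commute)
  qed
  then have "(\<Sum>i\<in>B. (w \<bullet> i) *\<^sub>R i) = (\<Sum>i\<in>Basis. (w \<bullet> i) *\<^sub>R i)"
    using assms(1) by (intro sum.mono_neutral_left) auto
  then show ?thesis by (simp add: euclidean_representation)
qed

lemma coordinate_step_in_cball:
  fixes w :: "'a::euclidean_space"
  assumes "insert j F \<subseteq> Basis" and "j \<notin> F" and "dist x0 a + (\<Sum>i\<in>Basis. \<bar>w \<bullet> i\<bar>) \<le> R"
    and "t \<in> {0..1}"
  shows "a + (\<Sum>i\<in>F. (w \<bullet> i) *\<^sub>R i) + (t * (w \<bullet> j)) *\<^sub>R j \<in> cball x0 R"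
proof -
  have "finite F"
    using assms(1) finite_subset[OF _ finite_Basis] by blast
  have "norm (\<Sum>i\<in>F. (w \<bullet> i) *\<^sub>R i) \<le> (\<Sum>i\<in>F. \<bar>w \<bullet> i\<bar>)"
    using assms(1) by (intro sum_norm_le) auto
  moreover have "norm ((t * (w \<bullet> j)) *\<^sub>R j) \<le> \<bar>w \<bullet> j\<bar>"
    using assms(1,4) by (simp add: abs_mult mult_left_le_one_le)
  ultimately have "norm ((\<Sum>i\<in>F. (w \<bullet> i) *\<^sub>R i) + (t * (w \<bullet> j)) *\<^sub>R j) \<le>
      (\<Sum>i\<in>F. \<bar>w \<bullet> i\<bar>) + \<bar>w \<bullet> j\<bar>"
    by (meson add_mono norm_triangle_le)
  also have "\<dots> \<le> (\<Sum>i\<in>Basis. \<bar>w \<bullet> i\<bar>)"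
    using \<open>finite F\<close> assms(1,2) sum_mono2[of Basis "insert j F" "\<lambda>i. \<bar>w \<bullet> i\<bar>"] by simp
  finally have "dist (a + (\<Sum>i\<in>F. (w \<bullet> i) *\<^sub>R i) + (t * (w \<bullet> j)) *\<^sub>R j) a \<le> (\<Sum>i\<in>Basis. \<bar>w \<bullet> i\<bar>)"
    by (simp add: dist_norm add.assoc)
  then show ?thesis
    using assms(3) dist_triangle2[of x0 _ a] by (smt (verit) mem_cball)
qed

(* Smoothness only provides the partial derivatives of the chart inverse along the basis, so the
   path in the chart moves along one coordinate direction at a time. *)
lemma admissible_path_along_coordinates:
  fixes \<psi> :: "'a::euclidean_space \<Rightarrow> 'a"
  assumes B: "B \<subseteq> Basis"
    and der: "\<forall>i\<in>Basis. \<forall>x\<in>V. ((\<lambda>t. \<psi> (x + t *\<^sub>R i)) has_vector_derivative D i x) (at 0)"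
    and cont: "\<forall>i\<in>Basis. continuous_on V (D i)"
    and \<psi>M: "\<forall>y\<in>V \<inter> span B. \<psi> y \<in> M"
    and ball: "cball x0 R \<subseteq> V"
    and K: "\<forall>i\<in>Basis. \<forall>x\<in>cball x0 R. norm (D i x) \<le> K" "0 \<le> K"
    and a: "a \<in> span B" and R: "dist x0 a + (\<Sum>i\<in>Basis. \<bar>w \<bullet> i\<bar>) \<le> R"
    and "F \<subseteq> B"
  shows "\<exists>g. admissible_path M g (\<psi> a) (\<psi> (a + (\<Sum>i\<in>F. (w \<bullet> i) *\<^sub>R i))) \<and>
           path_length g \<le> (\<Sum>i\<in>F. \<bar>w \<bullet> i\<bar>) * K"
  using finite_subset[OF \<open>F \<subseteq> B\<close> finite_subset[OF B finite_Basis]] \<open>F \<subseteq> B\<close>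
proof (induction F rule: finite_induct)
  case empty
  have "0 \<le> (\<Sum>i\<in>Basis. \<bar>w \<bullet> i\<bar>)"
    by (simp add: sum_nonneg)
  then have "dist x0 a \<le> R"
    using R by linarith
  then have "\<psi> a \<in> M"
    using ball a \<psi>M by auto
  then show ?case
    using admissible_path_const by (metis add.right_neutral mult_zero_left order_refl sum.empty)
next
  case (insert j F)
  define c where "c = a + (\<Sum>i\<in>F. (w \<bullet> i) *\<^sub>R i)"
  obtain g1 where g1: "admissible_path M g1 (\<psi> a) (\<psi> c)" "path_length g1 \<le> (\<Sum>i\<in>F. \<bar>w \<bullet> i\<bar>) * K"
    using insert.IH insert.prems unfolding c_def by blast
  have j: "j \<in> Basis" and FB: "insert j F \<subseteq> Basis"
    using insert B by auto
  have "c + (t * (w \<bullet> j)) *\<^sub>R j \<in> cball x0 R \<inter> span B" if "t \<in> {0..1}" for t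
  proof
    show "c + (t * (w \<bullet> j)) *\<^sub>R j \<in> cball x0 R"
      unfolding c_def using FB insert.hyps(2) R that by (rule coordinate_step_in_cball)
    show "c + (t * (w \<bullet> j)) *\<^sub>R j \<in> span B"
      unfolding c_def using insert.prems
      by (intro span_add[OF span_add[OF a]] span_sum span_scale span_base) auto
  qed
  then obtain g2 where g2: "admissible_path M g2 (\<psi> c) (\<psi> (c + (w \<bullet> j) *\<^sub>R j))"
    "path_length g2 \<le> \<bar>w \<bullet> j\<bar> * K"
    using admissible_path_coordinate_segment[of V \<psi> j "D j" c "w \<bullet> j" M K] der cont j ball \<psi>M K
    by blast
  have "c + (w \<bullet> j) *\<^sub>R j = a + (\<Sum>i\<in>insert j F. (w \<bullet> i) *\<^sub>R i)"
    using insert.hyps by (simp add: c_def algebra_simps)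
  with admissible_path_join[OF g1(1) g2(1)] g1(2) g2(2) insert.hyps show ?case
    by (intro exI[of _ "g1 +++ g2"]) (simp add: distrib_right)
qed

lemma admissible_path_in_chart:
  fixes \<psi> :: "'a::euclidean_space \<Rightarrow> 'a"
  assumes B: "B \<subseteq> Basis"
    and der: "\<forall>i\<in>Basis. \<forall>x\<in>V. ((\<lambda>t. \<psi> (x + t *\<^sub>R i)) has_vector_derivative D i x) (at 0)"
    and cont: "\<forall>i\<in>Basis. continuous_on V (D i)"
    and \<psi>M: "\<forall>y\<in>V \<inter> span B. \<psi> y \<in> M"
    and ball: "cball x0 R \<subseteq> V"
    and K: "\<forall>i\<in>Basis. \<forall>x\<in>cball x0 R. norm (D i x) \<le> K" "0 \<le> K"
    and a: "a \<in> span B" and w: "w \<in> span B"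
    and R: "dist x0 a + (\<Sum>i\<in>Basis. \<bar>w \<bullet> i\<bar>) \<le> R"
  shows "\<exists>g. admissible_path M g (\<psi> a) (\<psi> (a + w)) \<and> path_length g \<le> (\<Sum>i\<in>Basis. \<bar>w \<bullet> i\<bar>) * K"
proof -
  obtain g where "admissible_path M g (\<psi> a) (\<psi> (a + w))" "path_length g \<le> (\<Sum>i\<in>B. \<bar>w \<bullet> i\<bar>) * K"
    using admissible_path_along_coordinates[OF B der cont \<psi>M ball K a R order.refl]
      sum_Basis_inner_span[OF B w] by force
  moreover have "(\<Sum>i\<in>B. \<bar>w \<bullet> i\<bar>) * K \<le> (\<Sum>i\<in>Basis. \<bar>w \<bullet> i\<bar>) * K"
    using K B by (intro mult_right_mono sum_mono2) auto
  ultimately show ?thesis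
    by force
qed

lemma smooth_on_imp_continuous_on: "smooth_on S f \<Longrightarrow> continuous_on S f"
  unfolding smooth_on_def by (metis Ck.simps(1))

lemma smooth_on_partial_derivatives:
  "smooth_on S f \<Longrightarrow> \<exists>D. (\<forall>i\<in>Basis. \<forall>x\<in>S. ((\<lambda>t. f (x + t *\<^sub>R i)) has_vector_derivative D i x) (at 0))
                        \<and> (\<forall>i\<in>Basis. continuous_on S (D i))"
  unfolding smooth_on_def by (metis Ck.simps(1,2))

definition slice_chart ::
    "'a::euclidean_space set \<Rightarrow> 'a set \<Rightarrow> 'a set \<Rightarrow> ('a \<Rightarrow> 'a) \<Rightarrow> ('a \<Rightarrow> 'a) \<Rightarrow> 'a set \<Rightarrow> bool" where
  "slice_chart M U V \<phi> \<psi> B \<longleftrightarrow> open U \<and> open V \<and> B \<subseteq> Basis \<and>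
     continuous_on U \<phi> \<and> continuous_on V \<psi> \<and> \<phi> ` U \<subseteq> V \<and> (\<forall>x\<in>U. \<psi> (\<phi> x) = x) \<and>
     (\<forall>x\<in>U \<inter> M. \<phi> x \<in> span B) \<and> (\<forall>y\<in>V \<inter> span B. \<psi> y \<in> M)"

lemma smooth_submanifold_slice_chart:
  assumes "smooth_submanifold M" "p \<in> M"
  obtains U V \<phi> \<psi> B D where "p \<in> U" "slice_chart M U V \<phi> \<psi> B"
    "\<forall>i\<in>Basis. \<forall>x\<in>V. ((\<lambda>t. \<psi> (x + t *\<^sub>R i)) has_vector_derivative D i x) (at 0)"
    "\<forall>i\<in>Basis. continuous_on V (D i)"
proof -
  obtain U V \<phi> \<psi> B where chart: "open U" "p \<in> U" "open V" "B \<subseteq> Basis"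
      "smooth_on U (\<phi>::'a\<Rightarrow>'a)" "smooth_on V \<psi>" "\<phi> ` U = V"
      "\<forall>x\<in>U. \<psi> (\<phi> x) = x" "\<phi> ` (U \<inter> M) = V \<inter> span B"
    using assms unfolding smooth_submanifold_def by metis
  have "\<psi> y \<in> M" if "y \<in> V \<inter> span B" for y
    using that chart(8,9) by (metis IntD1 IntD2 imageE)
  then have "slice_chart M U V \<phi> \<psi> B"
    using chart by (auto simp: slice_chart_def smooth_on_imp_continuous_on)
  with chart(2) smooth_on_partial_derivatives[OF chart(6)] that show ?thesis
    by blast
qed

lemma riem_dist_le_in_chart:
  fixes \<psi> :: "'a::euclidean_space \<Rightarrow> 'a"
  assumes B: "B \<subseteq> Basis"
    and der: "\<forall>i\<in>Basis. \<forall>x\<in>V. ((\<lambda>t. \<psi> (x + t *\<^sub>R i)) has_vector_derivative D i x) (at 0)"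
    and cont: "\<forall>i\<in>Basis. continuous_on V (D i)"
    and \<psi>M: "\<forall>y\<in>V \<inter> span B. \<psi> y \<in> M"
    and ball: "cball x0 R \<subseteq> V"
    and K: "\<forall>i\<in>Basis. \<forall>x\<in>cball x0 R. norm (D i x) \<le> K" "0 \<le> K"
    and ab: "a \<in> span B" "b \<in> span B" and R: "dist x0 a + DIM('a) * norm (b - a) \<le> R"
  shows "riem_dist M (\<psi> a) (\<psi> b) \<le> ereal (DIM('a) * norm (b - a) * K)"
proof -
  define l where "l = (\<Sum>i\<in>Basis. \<bar>(b - a) \<bullet> i\<bar>)"
  have l: "l \<le> DIM('a) * norm (b - a)"
    unfolding l_def by (rule sum_Basis_abs_inner_le)
  with R have "\<exists>g. admissible_path M g (\<psi> a) (\<psi> (a + (b - a))) \<and> path_length g \<le> l * K"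
    unfolding l_def using ab
    by (intro admissible_path_in_chart[OF B der cont \<psi>M ball K]) (auto simp: span_diff)
  then obtain g where "admissible_path M g (\<psi> a) (\<psi> b)" "path_length g \<le> l * K"
    by auto
  moreover have "l * K \<le> DIM('a) * norm (b - a) * K"
    using l K(2) by (rule mult_right_mono)
  ultimately show ?thesis
    using riem_dist_le_path_length by (meson ereal_less_eq(3) order.trans)
qed

lemma partial_derivatives_bounded_on_cball:
  fixes D :: "'a::euclidean_space \<Rightarrow> 'a \<Rightarrow> 'b::real_normed_vector"
  assumes "\<forall>i\<in>Basis. continuous_on V (D i)" and "cball x0 R \<subseteq> V"
  obtains K where "K > 0" "\<forall>i\<in>Basis. \<forall>x\<in>cball x0 R. norm (D i x) \<le> K"
proof -
  have "compact (\<Union>i\<in>Basis. D i ` cball x0 R)"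
    using assms by (intro compact_UN compact_continuous_image) (auto intro: continuous_on_subset)
  then obtain K where "K > 0" "\<forall>y\<in>(\<Union>i\<in>Basis. D i ` cball x0 R). norm y \<le> K"
    by (metis compact_imp_bounded bounded_pos)
  with that show ?thesis
    by blast
qed

lemma riem_dist_le_on_chart_ball:
  fixes \<psi> :: "'a::euclidean_space \<Rightarrow> 'a"
  assumes B: "B \<subseteq> Basis" and V: "open V" "x0 \<in> V"
    and der: "\<forall>i\<in>Basis. \<forall>x\<in>V. ((\<lambda>t. \<psi> (x + t *\<^sub>R i)) has_vector_derivative D i x) (at 0)"
    and cont: "\<forall>i\<in>Basis. continuous_on V (D i)"
    and \<psi>M: "\<forall>y\<in>V \<inter> span B. \<psi> y \<in> M"
    and "\<epsilon> > 0"
  obtains r where "r > 0" "cball x0 r \<subseteq> V"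
    "\<forall>a\<in>cball x0 r \<inter> span B. \<forall>b\<in>cball x0 r \<inter> span B. riem_dist M (\<psi> a) (\<psi> b) \<le> ereal \<epsilon>"
proof -
  obtain R where R: "R > 0" "cball x0 R \<subseteq> V"
    using V open_contains_cball by blast
  obtain K where "K > 0" and "\<forall>i\<in>Basis. \<forall>x\<in>cball x0 R. norm (D i x) \<le> K"
    using partial_derivatives_bounded_on_cball[OF cont R(2)] by blast
  then have K: "\<forall>i\<in>Basis. \<forall>x\<in>cball x0 R. norm (D i x) \<le> K" "0 \<le> K"
    by auto
  define d where "d = real DIM('a)"
  have "d \<ge> 1"
    by (simp add: d_def DIM_positive Suc_leI)
  \<comment> \<open>the first bound keeps coordinate paths between points of the r-ball inside the
    R-ball, where the partial derivatives are bounded by K; the second makes their length at most \<epsilon>\<close>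
  define r where "r = min (R / (1 + 2 * d)) (\<epsilon> / (2 * d * K))"
  have "r > 0"
    using R \<open>K > 0\<close> \<open>d \<ge> 1\<close> \<open>\<epsilon> > 0\<close> by (simp add: r_def)
  have "r * (1 + 2 * d) \<le> R"
    using \<open>d \<ge> 1\<close> by (simp add: r_def flip: pos_le_divide_eq)
  then have rR: "r + d * (2 * r) \<le> R"
    by (simp add: algebra_simps)
  have "r * (2 * d * K) \<le> \<epsilon>"
    using \<open>d \<ge> 1\<close> \<open>K > 0\<close> by (simp add: r_def flip: pos_le_divide_eq)
  then have r\<epsilon>: "d * (2 * r) * K \<le> \<epsilon>"
    by (simp add: algebra_simps)
  have "riem_dist M (\<psi> a) (\<psi> b) \<le> ereal \<epsilon>"
    if a: "a \<in> cball x0 r \<inter> span B" and b: "b \<in> cball x0 r \<inter> span B" for a b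
  proof -
    have "dist b a \<le> 2 * r"
      using a b dist_triangle3[of b a x0] by auto
    then have ba: "d * norm (b - a) \<le> d * (2 * r)"
      using \<open>d \<ge> 1\<close> by (intro mult_left_mono) (auto simp: dist_norm)
    moreover have "dist x0 a \<le> r"
      using a by simp
    ultimately have "dist x0 a + d * norm (b - a) \<le> R"
      using rR by linarith
    then have "riem_dist M (\<psi> a) (\<psi> b) \<le> ereal (d * norm (b - a) * K)"
      using a b unfolding d_def by (intro riem_dist_le_in_chart[OF B der cont \<psi>M R(2) K]) auto
    also have "d * norm (b - a) * K \<le> \<epsilon>"
      using ba r\<epsilon> K(2) by (meson mult_right_mono order.trans)
    finally show ?thesis
      by simp
  qed
  moreover have "r \<le> R"
    using rR \<open>r > 0\<close> \<open>d \<ge> 1\<close> by (smt (verit) mult_nonneg_nonneg)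
  then have "cball x0 r \<subseteq> V"
    using subset_cball R(2) by blast
  ultimately show ?thesis
    using \<open>r > 0\<close> that by blast
qed

lemma smooth_submanifold_chart_ball:
  assumes "smooth_submanifold M" "p \<in> M" "\<epsilon> > 0"
  obtains U V \<phi> \<psi> B r where "p \<in> U" "slice_chart M U V \<phi> \<psi> B" "r > 0" "cball (\<phi> p) r \<subseteq> V"
    "\<forall>a\<in>cball (\<phi> p) r \<inter> span B. \<forall>b\<in>cball (\<phi> p) r \<inter> span B. riem_dist M (\<psi> a) (\<psi> b) \<le> ereal \<epsilon>"
proof -
  obtain U V \<phi> \<psi> B D where chart: "p \<in> U" "slice_chart M U V \<phi> \<psi> B"
    and der: "\<forall>i\<in>Basis. \<forall>x\<in>V. ((\<lambda>t. \<psi> (x + t *\<^sub>R i)) has_vector_derivative D i x) (at 0)"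
    and cont: "\<forall>i\<in>Basis. continuous_on V (D i)"
    by (rule smooth_submanifold_slice_chart[OF assms(1,2)])
  have "B \<subseteq> Basis" "open V" "\<phi> p \<in> V" "\<forall>y\<in>V \<inter> span B. \<psi> y \<in> M"
    using chart unfolding slice_chart_def by auto
  then obtain r where "r > 0" "cball (\<phi> p) r \<subseteq> V"
    "\<forall>a\<in>cball (\<phi> p) r \<inter> span B. \<forall>b\<in>cball (\<phi> p) r \<inter> span B. riem_dist M (\<psi> a) (\<psi> b) \<le> ereal \<epsilon>"
    using riem_dist_le_on_chart_ball[OF _ _ _ der cont _ assms(3)] by blast
  with chart show ?thesis
    by (rule that)
qed

lemma Lebesgue_number_pairs:
  fixes M :: "'a::real_normed_vector set"
  assumes "compact M"
    and "\<And>p. p \<in> M \<Longrightarrow> \<exists>W. open W \<and> p \<in> W \<and> (\<forall>y\<in>W \<inter> M. \<forall>z\<in>W \<inter> M. P y z)"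
  shows "\<exists>\<eta>>0. \<forall>y\<in>M. \<forall>z\<in>M. dist y z < \<eta> \<longrightarrow> P y z"
proof -
  define C where "C = {W. open W \<and> (\<forall>y\<in>W \<inter> M. \<forall>z\<in>W \<inter> M. P y z)}"
  have "{} \<in> C"
    by (simp add: C_def)
  then have ne: "C \<noteq> {}"
    by blast
  have cover: "M \<subseteq> \<Union>C"
  proof
    fix p assume "p \<in> M"
    then obtain W where "open W" "p \<in> W" "\<forall>y\<in>W \<inter> M. \<forall>z\<in>W \<inter> M. P y z"
      using assms(2) by meson
    then show "p \<in> \<Union>C"
      by (intro UnionI[of W]) (simp_all add: C_def)
  qed
  have "\<And>W. W \<in> C \<Longrightarrow> open W"
    by (simp add: C_def)
  then obtain \<eta> where "\<eta> > 0" and \<eta>: "\<And>T. T \<subseteq> M \<Longrightarrow> diameter T < \<eta> \<Longrightarrow> \<exists>W\<in>C. T \<subseteq> W"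
    using Lebesgue_number_lemma[OF assms(1) ne cover] by blast
  have "P y z" if "y \<in> M" "z \<in> M" "dist y z < \<eta>" for y z
  proof -
    have "diameter {y, z} \<le> dist y z"
      by (rule diameter_le) (auto simp: dist_norm norm_minus_commute)
    with that have "{y, z} \<subseteq> M" "diameter {y, z} < \<eta>"
      by auto
    then obtain W where "W \<in> C" "{y, z} \<subseteq> W"
      using \<eta> by blast
    with that show ?thesis
      by (simp add: C_def)
  qed
  with \<open>\<eta> > 0\<close> show ?thesis
    by blast
qed

lemma riem_dist_le_if_dist_less:
  fixes M :: "'a::euclidean_space set"
  assumes "compact M" and "smooth_submanifold M" and "\<epsilon> > 0"
  shows "\<exists>\<eta>>0. \<forall>y\<in>M. \<forall>z\<in>M. dist y z < \<eta> \<longrightarrow> riem_dist M y z \<le> ereal \<epsilon>"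
proof (rule Lebesgue_number_pairs[OF assms(1)])
  fix p assume "p \<in> M"
  obtain U V \<phi> \<psi> B r where "p \<in> U" "slice_chart M U V \<phi> \<psi> B" "r > 0" "cball (\<phi> p) r \<subseteq> V"
    and est: "\<forall>a\<in>cball (\<phi> p) r \<inter> span B. \<forall>b\<in>cball (\<phi> p) r \<inter> span B. riem_dist M (\<psi> a) (\<psi> b) \<le> ereal \<epsilon>"
    by (rule smooth_submanifold_chart_ball[OF assms(2) \<open>p \<in> M\<close> assms(3)])
  then have chart: "open U" "continuous_on U \<phi>" "\<forall>x\<in>U. \<psi> (\<phi> x) = x" "\<forall>x\<in>U \<inter> M. \<phi> x \<in> span B"
    unfolding slice_chart_def by auto
  define W where "W = U \<inter> \<phi> -` ball (\<phi> p) r"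
  have "open W"
    unfolding W_def using chart(2,1) by (rule continuous_open_preimage) simp
  moreover have "p \<in> W"
    using \<open>p \<in> U\<close> \<open>r > 0\<close> by (simp add: W_def)
  moreover have "riem_dist M y z \<le> ereal \<epsilon>" if "y \<in> W \<inter> M" "z \<in> W \<inter> M" for y z
  proof -
    have "\<phi> y \<in> cball (\<phi> p) r \<inter> span B" "\<phi> z \<in> cball (\<phi> p) r \<inter> span B"
      using that chart(4) by (auto simp: W_def)
    with est have "riem_dist M (\<psi> (\<phi> y)) (\<psi> (\<phi> z)) \<le> ereal \<epsilon>"
      by blast
    with that chart(3) show ?thesis
      by (simp add: W_def)
  qed
  ultimately show "\<exists>W. open W \<and> p \<in> W \<and> (\<forall>y\<in>W \<inter> M. \<forall>z\<in>W \<inter> M. riem_dist M y z \<le> ereal \<epsilon>)"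
    by blast
qed

section \<open>Perturbing a self-map at one point\<close>

lemma continuous_on_if_ball:
  fixes f g :: "'a::metric_space \<Rightarrow> 'b::topological_space"
  assumes "closed M" and "continuous_on (M \<inter> cball y \<rho>) g" and "continuous_on M f"
    and "\<And>z. z \<in> M \<Longrightarrow> dist y z = \<rho> \<Longrightarrow> g z = f z"
  shows "continuous_on M (\<lambda>z. if z \<in> ball y \<rho> then g z else f z)"
proof -
  have "continuous_on (M \<inter> cball y \<rho> \<union> (M - ball y \<rho>)) (\<lambda>z. if z \<in> ball y \<rho> then g z else f z)"
    using assms
    by (intro continuous_on_cases closed_Int closed_Diff continuous_on_subset[OF assms(3)]) auto
  moreover have "M \<inter> cball y \<rho> \<union> (M - ball y \<rho>) = M"
    by auto
  ultimately show ?thesis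
    by simp
qed

lemma slice_chart_shift:
  assumes chart: "slice_chart M U V \<phi> \<psi> B" and "cball x0 (3 * r) \<subseteq> V"
    and est: "\<forall>a\<in>cball x0 (3 * r) \<inter> span B. \<forall>b\<in>cball x0 (3 * r) \<inter> span B. riem_dist M (\<psi> a) (\<psi> b) \<le> ereal \<epsilon>"
    and a: "a \<in> U \<inter> M" "\<phi> a \<in> ball x0 r" and v: "v \<in> span B" "norm v < 2 * r"
    and t: "0 \<le> t" "t \<le> 1"
  shows "\<phi> a + t *\<^sub>R v \<in> V" "\<psi> (\<phi> a + t *\<^sub>R v) \<in> M" "riem_dist M a (\<psi> (\<phi> a + t *\<^sub>R v)) \<le> ereal \<epsilon>"
proof -
  have "dist x0 (\<phi> a) \<le> 3 * r"
    using a(2) zero_le_dist[of x0 "\<phi> a"] unfolding mem_ball by linarith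
  then have \<phi>a: "\<phi> a \<in> cball x0 (3 * r) \<inter> span B"
    using a(1) chart by (simp add: slice_chart_def)
  have "norm (t *\<^sub>R v) \<le> norm v"
    using t by (simp add: mult_left_le_one_le)
  then have "dist x0 (\<phi> a + t *\<^sub>R v) \<le> 3 * r"
    using a(2) v(2) dist_triangle[of x0 "\<phi> a + t *\<^sub>R v" "\<phi> a"] by (simp add: dist_norm)
  moreover have "\<phi> a + t *\<^sub>R v \<in> span B"
    using \<phi>a v(1) by (intro span_add span_scale) auto
  ultimately have shifted: "\<phi> a + t *\<^sub>R v \<in> cball x0 (3 * r) \<inter> span B"
    by simp
  then show "\<phi> a + t *\<^sub>R v \<in> V"
    using assms(2) by blast
  then show "\<psi> (\<phi> a + t *\<^sub>R v) \<in> M"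
    using shifted chart by (auto simp: slice_chart_def)
  have "\<psi> (\<phi> a) = a"
    using a chart by (simp add: slice_chart_def)
  with est \<phi>a shifted show "riem_dist M a (\<psi> (\<phi> a + t *\<^sub>R v)) \<le> ereal \<epsilon>"
    by metis
qed

lemma dC0_le: "(\<And>z. z \<in> M \<Longrightarrow> d (f z) (g z) \<le> c) \<Longrightarrow> dC0 d M f g \<le> c"
  unfolding dC0_def by (rule SUP_least)

lemma continuous_on_cball_into_open:
  fixes f :: "'a::metric_space \<Rightarrow> 'b::metric_space"
  assumes "continuous_on M f" and "y \<in> M" and "open W" and "f y \<in> W"
  obtains \<rho> where "\<rho> > 0" and "\<And>z. z \<in> M \<Longrightarrow> dist y z \<le> \<rho> \<Longrightarrow> f z \<in> W"
proof -
  obtain e where "e > 0" and e: "ball (f y) e \<subseteq> W"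
    using assms(3,4) open_contains_ball by blast
  obtain \<rho> where "\<rho> > 0" and \<rho>: "\<forall>z\<in>M. dist z y < 2 * \<rho> \<longrightarrow> dist (f z) (f y) < e"
    using assms(1,2) \<open>e > 0\<close> unfolding continuous_on_iff by (metis half_gt_zero mult_2 field_sum_of_halves)
  have "f z \<in> W" if "z \<in> M" "dist y z \<le> \<rho>" for z
  proof -
    have "dist z y < 2 * \<rho>"
      using that \<open>\<rho> > 0\<close> by (simp add: dist_commute)
    with \<rho> \<open>z \<in> M\<close> have "dist (f z) (f y) < e"
      by blast
    with e show ?thesis
      by (auto simp: dist_commute)
  qed
  with \<open>\<rho> > 0\<close> that show ?thesis
    by blast
qed

lemma perturbation_in_ball:
  assumes "closed M" and f: "continuous_on M f" "f ` M \<subseteq> M" and "0 \<le> \<epsilon>" and "\<rho> > 0"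
    and g: "continuous_on (M \<inter> cball y \<rho>) g" "\<And>z. z \<in> M \<Longrightarrow> dist y z = \<rho> \<Longrightarrow> g z = f z"
    and near: "\<And>z. z \<in> M \<Longrightarrow> dist y z \<le> \<rho> \<Longrightarrow> g z \<in> M \<and> riem_dist M (f z) (g z) \<le> ereal \<epsilon>"
  shows "\<exists>h. continuous_on M h \<and> h ` M \<subseteq> M \<and> h y = g y \<and> dC0 (riem_dist M) M f h \<le> ereal \<epsilon>"
proof -
  define h where "h z = (if z \<in> ball y \<rho> then g z else f z)" for z
  have "continuous_on M h"
    unfolding h_def by (rule continuous_on_if_ball[OF assms(1) g(1) f(1) g(2)])
  moreover have "h ` M \<subseteq> M"
    using near f(2) by (auto simp: h_def)
  moreover have "h y = g y"
    using \<open>\<rho> > 0\<close> by (simp add: h_def)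
  moreover have "dC0 (riem_dist M) M f h \<le> ereal \<epsilon>"
  proof (rule dC0_le)
    fix z assume "z \<in> M"
    show "riem_dist M (f z) (h z) \<le> ereal \<epsilon>"
    proof (cases "z \<in> ball y \<rho>")
      case True
      with near \<open>z \<in> M\<close> show ?thesis
        by (simp add: h_def)
    next
      case False
      have "riem_dist M (f z) (f z) \<le> 0"
        using \<open>z \<in> M\<close> f(2) by (intro riem_dist_self) blast
      also have "0 \<le> ereal \<epsilon>"
        using \<open>0 \<le> \<epsilon>\<close> by simp
      finally show ?thesis
        using False by (simp add: h_def)
    qed
  qed
  ultimately show ?thesis
    by blast
qed

(* f y is moved onto q by a translation in the chart, damped by a cone-shaped bump around y
   which vanishes on the sphere of radius rho. *)
lemma chart_perturbation:
  assumes "closed M" and chart: "slice_chart M U V \<phi> \<psi> B" and ball: "cball x0 (3 * r) \<subseteq> V"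
    and est: "\<forall>a\<in>cball x0 (3 * r) \<inter> span B. \<forall>b\<in>cball x0 (3 * r) \<inter> span B. riem_dist M (\<psi> a) (\<psi> b) \<le> ereal \<epsilon>"
    and "0 \<le> \<epsilon>"
    and f: "continuous_on M f" "f ` M \<subseteq> M" and "y \<in> M"
    and fy: "f y \<in> U \<inter> \<phi> -` ball x0 r" and q: "q \<in> U \<inter> \<phi> -` ball x0 r" "q \<in> M"
  shows "\<exists>h. continuous_on M h \<and> h ` M \<subseteq> M \<and> h y = q \<and> dC0 (riem_dist M) M f h \<le> ereal \<epsilon>"
proof -
  have \<phi>: "open U" "continuous_on U \<phi>" "\<forall>x\<in>U. \<psi> (\<phi> x) = x" "\<forall>x\<in>U \<inter> M. \<phi> x \<in> span B"
    and \<psi>: "continuous_on V \<psi>"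
    using chart by (auto simp: slice_chart_def)
  have "open (U \<inter> \<phi> -` ball x0 r)"
    using \<phi>(2,1) by (rule continuous_open_preimage) simp
  then obtain \<rho> where "\<rho> > 0" and fW: "\<And>z. z \<in> M \<Longrightarrow> dist y z \<le> \<rho> \<Longrightarrow> f z \<in> U \<inter> \<phi> -` ball x0 r"
    using continuous_on_cball_into_open[OF f(1) \<open>y \<in> M\<close> _ fy] by blast
  define v where "v = \<phi> q - \<phi> (f y)"
  define \<beta> where "\<beta> z = 1 - dist y z / \<rho>" for z
  define g where "g z = \<psi> (\<phi> (f z) + \<beta> z *\<^sub>R v)" for z
  have "dist (\<phi> q) (\<phi> (f y)) < r + r"
    using fy q by (intro dist_triangle_less_add) (auto simp: dist_commute)
  moreover have "v \<in> span B"
    using fy f(2) \<open>y \<in> M\<close> q \<phi>(4) by (auto simp: v_def intro: span_diff)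
  ultimately have v: "v \<in> span B" "norm v < 2 * r"
    by (simp_all add: v_def dist_norm)
  have near: "\<phi> (f z) + \<beta> z *\<^sub>R v \<in> V" "g z \<in> M" "riem_dist M (f z) (g z) \<le> ereal \<epsilon>"
    if "z \<in> M" "dist y z \<le> \<rho>" for z
    using slice_chart_shift[OF chart ball est _ _ v, of "f z" "\<beta> z"] that fW[OF that] f(2) \<open>\<rho> > 0\<close>
    by (auto simp: g_def \<beta>_def)
  have "continuous_on (M \<inter> cball y \<rho>) g"
    unfolding g_def
  proof (rule continuous_on_compose2[OF \<psi>])
    have "continuous_on (M \<inter> cball y \<rho>) (\<lambda>z. \<phi> (f z))"
      using fW by (intro continuous_on_compose2[OF \<phi>(2) continuous_on_subset[OF f(1)]]) auto
    then show "continuous_on (M \<inter> cball y \<rho>) (\<lambda>z. \<phi> (f z) + \<beta> z *\<^sub>R v)"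
      unfolding \<beta>_def using \<open>\<rho> > 0\<close> by (intro continuous_intros) auto
    show "(\<lambda>z. \<phi> (f z) + \<beta> z *\<^sub>R v) ` (M \<inter> cball y \<rho>) \<subseteq> V"
      using near(1) by auto
  qed
  moreover have "g z = f z" if "z \<in> M" "dist y z = \<rho>" for z
    using that fW[of z] \<phi>(3) \<open>\<rho> > 0\<close> by (simp add: g_def \<beta>_def)
  moreover have "g y = q"
    using fy q \<phi>(3) by (simp add: g_def \<beta>_def v_def)
  ultimately show ?thesis
    using perturbation_in_ball[OF \<open>closed M\<close> f \<open>0 \<le> \<epsilon>\<close> \<open>\<rho> > 0\<close>, of y g] near(2,3) by auto
qed

lemma perturbation_through_point:
  fixes M :: "'a::euclidean_space set"
  assumes "compact M" and "smooth_submanifold M" and "\<epsilon> > 0"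
  shows "\<exists>\<delta>>0. \<forall>f y q. continuous_on M f \<and> f ` M \<subseteq> M \<and> y \<in> M \<and> q \<in> M \<and> dist (f y) q < \<delta> \<longrightarrow>
           (\<exists>h. continuous_on M h \<and> h ` M \<subseteq> M \<and> h y = q \<and> dC0 (riem_dist M) M f h \<le> ereal \<epsilon>)"
proof -
  let ?P = "\<lambda>a b. \<forall>f y. continuous_on M f \<and> f ` M \<subseteq> M \<and> y \<in> M \<and> f y = a \<longrightarrow>
             (\<exists>h. continuous_on M h \<and> h ` M \<subseteq> M \<and> h y = b \<and> dC0 (riem_dist M) M f h \<le> ereal \<epsilon>)"
  have "\<exists>\<delta>>0. \<forall>a\<in>M. \<forall>b\<in>M. dist a b < \<delta> \<longrightarrow> ?P a b"
  proof (rule Lebesgue_number_pairs[OF assms(1)])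
    fix p assume "p \<in> M"
    obtain U V \<phi> \<psi> B r where "p \<in> U" and chart: "slice_chart M U V \<phi> \<psi> B" and "r > 0"
      and "cball (\<phi> p) r \<subseteq> V"
      and "\<forall>a\<in>cball (\<phi> p) r \<inter> span B. \<forall>b\<in>cball (\<phi> p) r \<inter> span B. riem_dist M (\<psi> a) (\<psi> b) \<le> ereal \<epsilon>"
      by (rule smooth_submanifold_chart_ball[OF assms(2) \<open>p \<in> M\<close> assms(3)])
    then have ball: "cball (\<phi> p) (3 * (r / 3)) \<subseteq> V"
      and est: "\<forall>a\<in>cball (\<phi> p) (3 * (r / 3)) \<inter> span B. \<forall>b\<in>cball (\<phi> p) (3 * (r / 3)) \<inter> span B.
                  riem_dist M (\<psi> a) (\<psi> b) \<le> ereal \<epsilon>"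
      by simp_all
    define W where "W = U \<inter> \<phi> -` ball (\<phi> p) (r / 3)"
    have "open W"
      unfolding W_def using chart by (intro continuous_open_preimage) (auto simp: slice_chart_def)
    moreover have "p \<in> W"
      using \<open>p \<in> U\<close> \<open>r > 0\<close> by (simp add: W_def)
    moreover have "\<forall>a\<in>W \<inter> M. \<forall>b\<in>W \<inter> M. ?P a b"
      using chart_perturbation[OF compact_imp_closed[OF assms(1)] chart ball est] \<open>\<epsilon> > 0\<close>
      by (auto simp: W_def)
    ultimately show "\<exists>W. open W \<and> p \<in> W \<and> (\<forall>a\<in>W \<inter> M. \<forall>b\<in>W \<inter> M. ?P a b)"
      by (intro exI[of _ W] conjI)
  qed
  then obtain \<delta> where "\<delta> > 0" and \<delta>: "\<forall>a\<in>M. \<forall>b\<in>M. dist a b < \<delta> \<longrightarrow> ?P a b"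
    by blast
  show ?thesis
  proof (intro exI[of _ \<delta>] conjI allI impI)
    fix f y q
    assume "continuous_on M f \<and> f ` M \<subseteq> M \<and> y \<in> M \<and> q \<in> M \<and> dist (f y) q < \<delta>"
    then show "\<exists>h. continuous_on M h \<and> h ` M \<subseteq> M \<and> h y = q \<and> dC0 (riem_dist M) M f h \<le> ereal \<epsilon>"
      by (intro \<delta>[rule_format, of "f y" q f y]) auto
  qed (rule \<open>\<delta> > 0\<close>)
qed

section \<open>Nearby finite IFS\<close>

lemma IFS_continuous_on:
  assumes "IFS \<Lambda> M \<omega>" and "l \<in> \<Lambda>"
  shows "continuous_on M (\<omega> l)"
proof -
  have "continuous_on M ((\<lambda>(l, x). \<omega> l x) \<circ> Pair l)"
    using assms unfolding IFS_def
    by (intro continuous_on_compose continuous_intros) (auto elim: continuous_on_subset)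
  then show ?thesis
    by (simp add: o_def)
qed

lemma IFS_image_subset: "IFS \<Lambda> M \<omega> \<Longrightarrow> l \<in> \<Lambda> \<Longrightarrow> \<omega> l ` M \<subseteq> M"
  unfolding IFS_def by blast

lemma dC0_riem_dist_self: "f ` M \<subseteq> M \<Longrightarrow> dC0 (riem_dist M) M f f \<le> 0"
  by (intro dC0_le riem_dist_self) blast

lemma dH_le:
  assumes "\<And>l. l \<in> \<Lambda> \<Longrightarrow> \<exists>l'\<in>\<Lambda>'. dC0 d M (\<omega> l) (\<omega>' l') \<le> c"
    and "\<And>l'. l' \<in> \<Lambda>' \<Longrightarrow> \<exists>l\<in>\<Lambda>. dC0 d M (\<omega> l) (\<omega>' l') \<le> c"
  shows "dH d M \<Lambda> \<omega> \<Lambda>' \<omega>' \<le> c"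
  unfolding dH_def
  by (intro max.boundedI SUP_least) (meson INF_lower2 assms)+

lemma IFS_finite_net:
  fixes M :: "'a::euclidean_space set" and \<Lambda> :: "'l::metric_space set"
  assumes "compact M" and "smooth_submanifold M" and "IFS \<Lambda> M \<omega>" and "\<epsilon> > 0"
  shows "\<exists>cs. set cs \<subseteq> \<Lambda> \<and> (\<forall>l\<in>\<Lambda>. \<exists>c\<in>set cs. dC0 (riem_dist M) M (\<omega> l) (\<omega> c) \<le> ereal \<epsilon>)"
proof -
  obtain \<eta> where "\<eta> > 0" and \<eta>: "\<forall>y\<in>M. \<forall>z\<in>M. dist y z < \<eta> \<longrightarrow> riem_dist M y z \<le> ereal \<epsilon>"
    using riem_dist_le_if_dist_less[OF assms(1,2,4)] by blast
  have "compact \<Lambda>" and "continuous_on (\<Lambda> \<times> M) (\<lambda>(l, x). \<omega> l x)"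
    using assms(3) by (auto simp: IFS_def)
  then have "uniformly_continuous_on (\<Lambda> \<times> M) (\<lambda>(l, x). \<omega> l x)"
    using assms(1) by (intro compact_uniformly_continuous compact_Times)
  then obtain \<zeta> where "\<zeta> > 0" and \<zeta>: "\<forall>a\<in>\<Lambda> \<times> M. \<forall>b\<in>\<Lambda> \<times> M. dist b a < \<zeta> \<longrightarrow>
      dist ((\<lambda>(l, x). \<omega> l x) b) ((\<lambda>(l, x). \<omega> l x) a) < \<eta>"
    unfolding uniformly_continuous_on_def using \<open>\<eta> > 0\<close> by blast
  obtain F where F: "F \<subseteq> \<Lambda>" "finite F" "\<Lambda> \<subseteq> (\<Union>c\<in>F. ball c \<zeta>)"
    using compactE_image[OF \<open>compact \<Lambda>\<close>, of \<Lambda> "\<lambda>c. ball c \<zeta>"] \<open>\<zeta> > 0\<close> by force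
  have "\<exists>c\<in>F. dC0 (riem_dist M) M (\<omega> l) (\<omega> c) \<le> ereal \<epsilon>" if "l \<in> \<Lambda>" for l
  proof -
    obtain c where "c \<in> F" "dist c l < \<zeta>"
      using F(3) \<open>l \<in> \<Lambda>\<close> by auto
    have "riem_dist M (\<omega> l z) (\<omega> c z) \<le> ereal \<epsilon>" if "z \<in> M" for z
    proof -
      have "dist (c, z) (l, z) < \<zeta>"
        using \<open>dist c l < \<zeta>\<close> by (simp add: dist_Pair_Pair)
      then have "dist (\<omega> l z) (\<omega> c z) < \<eta>"
        using \<zeta> \<open>l \<in> \<Lambda>\<close> \<open>c \<in> F\<close> F(1) \<open>z \<in> M\<close> by (fastforce simp: dist_commute)
      then show ?thesis
        using \<eta> IFS_image_subset[OF assms(3)] \<open>l \<in> \<Lambda>\<close> \<open>c \<in> F\<close> F(1) \<open>z \<in> M\<close> by blast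
    qed
    with \<open>c \<in> F\<close> show ?thesis
      by (blast intro: dC0_le)
  qed
  moreover obtain cs where "set cs = F"
    using finite_list[OF F(2)] by blast
  ultimately show ?thesis
    using F(1) by blast
qed

lemma continuous_on_finite_Times:
  fixes w :: "'l::t1_space \<Rightarrow> 'a::topological_space \<Rightarrow> 'b::topological_space"
  assumes "finite L" and "closed M" and "\<And>t. t \<in> L \<Longrightarrow> continuous_on M (w t)"
  shows "continuous_on (L \<times> M) (\<lambda>(t, z). w t z)"
  using assms
proof (induction L rule: finite_induct)
  case (insert t L)
  have "continuous_on ({t} \<times> M) (\<lambda>p. w t (snd p))"
    using insert.prems by (intro continuous_on_compose2[of M "w t" _ snd] continuous_intros) auto
  then have "continuous_on ({t} \<times> M) (\<lambda>(t, z). w t z)"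
    by (rule continuous_on_eq) auto
  then have "continuous_on ({t} \<times> M \<union> L \<times> M) (\<lambda>(t, z). w t z)"
    using insert by (intro continuous_on_closed_Un closed_Times finite_imp_closed) auto
  moreover have "insert t L \<times> M = {t} \<times> M \<union> L \<times> M"
    by auto
  ultimately show ?case
    by simp
qed simp

lemma IFS_finite_family:
  assumes "closed M" and "finite I" and "\<And>j. j \<in> I \<Longrightarrow> continuous_on M (G j) \<and> G j ` M \<subseteq> M"
  shows "IFS (real ` I) M (\<lambda>t. G (nat \<lfloor>t\<rfloor>))"
  unfolding IFS_def
proof (intro conjI)
  show "compact (real ` I)"
    using assms(2) by (intro finite_imp_compact) simp
  show "continuous_on (real ` I \<times> M) (\<lambda>(t, z). G (nat \<lfloor>t\<rfloor>) z)"
    using assms by (intro continuous_on_finite_Times) auto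
  show "\<forall>t\<in>real ` I. \<forall>z\<in>M. G (nat \<lfloor>t\<rfloor>) z \<in> M"
    using assms(3) by auto
qed

definition adjoin_maps :: "('l \<Rightarrow> 'a \<Rightarrow> 'a) \<Rightarrow> 'l list \<Rightarrow> (nat \<Rightarrow> 'a \<Rightarrow> 'a) \<Rightarrow> real \<Rightarrow> 'a \<Rightarrow> 'a" where
  "adjoin_maps \<omega> cs H t =
     (if nat \<lfloor>t\<rfloor> < length cs then \<omega> (cs ! nat \<lfloor>t\<rfloor>) else H (nat \<lfloor>t\<rfloor> - length cs + 1))"

lemma adjoin_maps_real:
  "adjoin_maps \<omega> cs H (real j) = (if j < length cs then \<omega> (cs ! j) else H (j - length cs + 1))"
  by (simp add: adjoin_maps_def)

lemma adjoin_maps_param: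
  assumes "k \<in> {1..n}"
  shows "real (length cs + k - 1) \<in> real ` {..<length cs + n}"
    and "adjoin_maps \<omega> cs H (real (length cs + k - 1)) = H k"
proof -
  show "real (length cs + k - 1) \<in> real ` {..<length cs + n}"
    using assms by (intro imageI) auto
  show "adjoin_maps \<omega> cs H (real (length cs + k - 1)) = H k"
    by (subst adjoin_maps_real) (use assms in auto)
qed

lemma IFS_adjoin_maps:
  assumes "closed M" and "IFS \<Lambda> M \<omega>" and "set cs \<subseteq> \<Lambda>"
    and "\<forall>k\<in>{1..n}. continuous_on M (H k) \<and> H k ` M \<subseteq> M"
  shows "IFS (real ` {..<length cs + n}) M (adjoin_maps \<omega> cs H)"
  unfolding adjoin_maps_def
proof (rule IFS_finite_family[OF assms(1), where G = "\<lambda>j. if j < length cs then \<omega> (cs ! j) else H (j - length cs + 1)"])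
  fix j assume "j \<in> {..<length cs + n}"
  show "continuous_on M (if j < length cs then \<omega> (cs ! j) else H (j - length cs + 1)) \<and>
      (if j < length cs then \<omega> (cs ! j) else H (j - length cs + 1)) ` M \<subseteq> M"
  proof (cases "j < length cs")
    case True
    then have "cs ! j \<in> \<Lambda>"
      using assms(3) nth_mem by blast
    with True show ?thesis
      using IFS_continuous_on[OF assms(2)] IFS_image_subset[OF assms(2)] by simp
  next
    case False
    with \<open>j \<in> {..<length cs + n}\<close> have "j - length cs + 1 \<in> {1..n}"
      by auto
    with False assms(4) show ?thesis
      by simp
  qed
qed simp

lemma dH_adjoin_maps_le:
  assumes "IFS \<Lambda> M \<omega>" and "set cs \<subseteq> \<Lambda>" and "0 \<le> \<epsilon>"
    and net: "\<forall>l\<in>\<Lambda>. \<exists>c\<in>set cs. dC0 (riem_dist M) M (\<omega> l) (\<omega> c) \<le> ereal \<epsilon>"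
    and H: "\<forall>k\<in>{1..n}. \<sigma> k \<in> \<Lambda> \<and> dC0 (riem_dist M) M (\<omega> (\<sigma> k)) (H k) \<le> ereal \<epsilon>"
  shows "dH (riem_dist M) M \<Lambda> \<omega> (real ` {..<length cs + n}) (adjoin_maps \<omega> cs H) \<le> ereal \<epsilon>"
proof (rule dH_le)
  fix l assume "l \<in> \<Lambda>"
  then obtain j where "j < length cs" "dC0 (riem_dist M) M (\<omega> l) (\<omega> (cs ! j)) \<le> ereal \<epsilon>"
    using net by (metis in_set_conv_nth)
  then show "\<exists>l'\<in>real ` {..<length cs + n}. dC0 (riem_dist M) M (\<omega> l) (adjoin_maps \<omega> cs H l') \<le> ereal \<epsilon>"
    by (intro bexI[of _ "real j"]) (auto simp: adjoin_maps_real)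
next
  fix l' assume "l' \<in> real ` {..<length cs + n}"
  then obtain j where j: "j < length cs + n" "l' = real j"
    by blast
  show "\<exists>l\<in>\<Lambda>. dC0 (riem_dist M) M (\<omega> l) (adjoin_maps \<omega> cs H l') \<le> ereal \<epsilon>"
  proof (cases "j < length cs")
    case True
    then have "cs ! j \<in> \<Lambda>"
      using assms(2) nth_mem by blast
    then have "dC0 (riem_dist M) M (\<omega> (cs ! j)) (\<omega> (cs ! j)) \<le> ereal \<epsilon>"
      using dC0_riem_dist_self IFS_image_subset[OF assms(1)] \<open>0 \<le> \<epsilon>\<close>
      by (meson ereal_less_eq(5) order.trans)
    with True j \<open>cs ! j \<in> \<Lambda>\<close> show ?thesis
      by (auto simp: adjoin_maps_real)
  next
    case False
    with j H show ?thesis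
      by (intro bexI[of _ "\<sigma> (j - length cs + 1)"]) (auto simp: adjoin_maps_real)
  qed
qed

lemma comp_seq_chain:
  assumes "\<And>k. k \<in> {1..n} \<Longrightarrow> \<omega> (\<sigma> k) (x (k - 1)) = x k" and "k \<le> n"
  shows "comp_seq \<omega> \<sigma> k (x 0) = x k"
  using assms(2)
proof (induction k)
  case (Suc k)
  then show ?case
    using assms(1)[of "Suc k"] by simp
qed simp

definition finite_chain ::
    "'a::euclidean_space set \<Rightarrow> 'l set \<Rightarrow> ('l \<Rightarrow> 'a \<Rightarrow> 'a) \<Rightarrow> real \<Rightarrow> nat \<Rightarrow> (nat \<Rightarrow> 'a) \<Rightarrow> (nat \<Rightarrow> 'l) \<Rightarrow> bool"
  where "finite_chain M \<Lambda> \<omega> \<delta> n x \<sigma> \<longleftrightarrow> (\<forall>k\<le>n. x k \<in> M) \<and> (\<forall>k\<in>{1..n}. \<sigma> k \<in> \<Lambda>) \<and>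
     (\<forall>k\<in>{1..n}. riem_dist M (x k) (\<omega> (\<sigma> k) (x (k - 1))) \<le> ereal \<delta>)"

lemma chain_perturbations:
  fixes M :: "'a::euclidean_space set" and \<Lambda> :: "'l::metric_space set"
  assumes "compact M" and "smooth_submanifold M" and "IFS \<Lambda> M \<omega>" and "\<epsilon> > 0"
  shows "\<exists>\<delta>>0. \<forall>n x \<sigma>. finite_chain M \<Lambda> \<omega> \<delta> n x \<sigma> \<longrightarrow>
           (\<exists>H. \<forall>k\<in>{1..n}. continuous_on M (H k) \<and> H k ` M \<subseteq> M \<and> H k (x (k - 1)) = x k \<and>
                 dC0 (riem_dist M) M (\<omega> (\<sigma> k)) (H k) \<le> ereal \<epsilon>)"
proof -
  obtain \<delta> where "\<delta> > 0" and \<delta>: "\<forall>f y q. continuous_on M f \<and> f ` M \<subseteq> M \<and> y \<in> M \<and> q \<in> M \<and> dist (f y) q < \<delta> \<longrightarrow>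
      (\<exists>h. continuous_on M h \<and> h ` M \<subseteq> M \<and> h y = q \<and> dC0 (riem_dist M) M f h \<le> ereal \<epsilon>)"
    using perturbation_through_point[OF assms(1,2,4)] by blast
  have step: "\<exists>h. continuous_on M h \<and> h ` M \<subseteq> M \<and> h (x (k - 1)) = x k \<and>
      dC0 (riem_dist M) M (\<omega> (\<sigma> k)) h \<le> ereal \<epsilon>"
    if "finite_chain M \<Lambda> \<omega> (\<delta> / 2) n x \<sigma>" and "k \<in> {1..n}" for n x \<sigma> k
  proof -
    have chain: "\<forall>k\<le>n. x k \<in> M" "\<forall>k\<in>{1..n}. \<sigma> k \<in> \<Lambda>"
      "\<forall>k\<in>{1..n}. riem_dist M (x k) (\<omega> (\<sigma> k) (x (k - 1))) \<le> ereal (\<delta> / 2)" "k \<in> {1..n}"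
      using that unfolding finite_chain_def by auto
    have "k - 1 \<le> n"
      using chain(4) by auto
    then have "x (k - 1) \<in> M" "x k \<in> M" "\<sigma> k \<in> \<Lambda>"
      using chain by auto
    moreover have "ereal (dist (x k) (\<omega> (\<sigma> k) (x (k - 1)))) \<le> ereal (\<delta> / 2)"
      using dist_le_riem_dist[of "x k"] chain(3,4) by (blast intro: order.trans)
    then have "dist (\<omega> (\<sigma> k) (x (k - 1))) (x k) < \<delta>"
      using \<open>\<delta> > 0\<close> by (simp add: dist_commute)
    ultimately show ?thesis
      using \<delta>[rule_format, of "\<omega> (\<sigma> k)" "x (k - 1)" "x k"]
        IFS_continuous_on[OF assms(3)] IFS_image_subset[OF assms(3)] by auto
  qed
  show ?thesis
  proof (intro exI[of _ "\<delta> / 2"] conjI allI impI)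
    fix n x \<sigma>
    assume "finite_chain M \<Lambda> \<omega> (\<delta> / 2) n x \<sigma>"
    then show "\<exists>H. \<forall>k\<in>{1..n}. continuous_on M (H k) \<and> H k ` M \<subseteq> M \<and> H k (x (k - 1)) = x k \<and>
                 dC0 (riem_dist M) M (\<omega> (\<sigma> k)) (H k) \<le> ereal \<epsilon>"
      using step by (intro bchoice) blast
  qed (use \<open>\<delta> > 0\<close> in simp)
qed

lemma chain_is_orbit_of_nearby_IFS:
  fixes M :: "'a::euclidean_space set" and \<Lambda> :: "'l::metric_space set"
  assumes "compact M" and "smooth_submanifold M" and "IFS \<Lambda> M \<omega>" and "\<epsilon> > 0"
  shows "\<exists>\<delta>>0. \<forall>n x \<sigma>. finite_chain M \<Lambda> \<omega> \<delta> n x \<sigma> \<longrightarrow>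
           (\<exists>(\<Lambda>'::real set) \<omega>' \<sigma>'. IFS \<Lambda>' M \<omega>' \<and> dH (riem_dist M) M \<Lambda> \<omega> \<Lambda>' \<omega>' \<le> ereal \<epsilon> \<and>
              (\<forall>k\<in>{1..n}. \<sigma>' k \<in> \<Lambda>' \<and> dC0 (riem_dist M) M (\<omega> (\<sigma> k)) (\<omega>' (\<sigma>' k)) \<le> ereal \<epsilon>) \<and>
              (\<forall>k\<le>n. comp_seq \<omega>' \<sigma>' k (x 0) = x k))"
proof -
  obtain cs where "set cs \<subseteq> \<Lambda>"
    and net: "\<forall>l\<in>\<Lambda>. \<exists>c\<in>set cs. dC0 (riem_dist M) M (\<omega> l) (\<omega> c) \<le> ereal \<epsilon>"
    using IFS_finite_net[OF assms] by blast
  obtain \<delta> where "\<delta> > 0" and \<delta>: "\<forall>n x \<sigma>. finite_chain M \<Lambda> \<omega> \<delta> n x \<sigma> \<longrightarrow>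
      (\<exists>H. \<forall>k\<in>{1..n}. continuous_on M (H k) \<and> H k ` M \<subseteq> M \<and> H k (x (k - 1)) = x k \<and>
            dC0 (riem_dist M) M (\<omega> (\<sigma> k)) (H k) \<le> ereal \<epsilon>)"
    using chain_perturbations[OF assms] by blast
  show ?thesis
  proof (intro exI[of _ \<delta>] conjI allI impI \<open>\<delta> > 0\<close>)
    fix n x \<sigma>
    assume chain: "finite_chain M \<Lambda> \<omega> \<delta> n x \<sigma>"
    then obtain H where H: "\<forall>k\<in>{1..n}. continuous_on M (H k) \<and> H k ` M \<subseteq> M \<and> H k (x (k - 1)) = x k \<and>
        dC0 (riem_dist M) M (\<omega> (\<sigma> k)) (H k) \<le> ereal \<epsilon>"
      using \<delta>[rule_format, of n x \<sigma>] by blast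
    define \<sigma>' where "\<sigma>' k = real (length cs + k - 1)" for k
    have \<sigma>': "\<sigma>' k \<in> real ` {..<length cs + n}" "adjoin_maps \<omega> cs H (\<sigma>' k) = H k" if "k \<in> {1..n}" for k
      unfolding \<sigma>'_def using that by (rule adjoin_maps_param)+
    have "IFS (real ` {..<length cs + n}) M (adjoin_maps \<omega> cs H)"
      using H by (intro IFS_adjoin_maps[OF compact_imp_closed[OF assms(1)] assms(3) \<open>set cs \<subseteq> \<Lambda>\<close>]) simp
    moreover have "dH (riem_dist M) M \<Lambda> \<omega> (real ` {..<length cs + n}) (adjoin_maps \<omega> cs H) \<le> ereal \<epsilon>"
      using H chain \<open>\<epsilon> > 0\<close> unfolding finite_chain_def
      by (intro dH_adjoin_maps_le[OF assms(3) \<open>set cs \<subseteq> \<Lambda>\<close> _ net]) auto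
    moreover have "comp_seq (adjoin_maps \<omega> cs H) \<sigma>' k (x 0) = x k" if "k \<le> n" for k
      using comp_seq_chain[of n "adjoin_maps \<omega> cs H" \<sigma>' x k] H \<sigma>'(2) that by simp
    ultimately show "\<exists>(\<Lambda>'::real set) \<omega>' \<sigma>'. IFS \<Lambda>' M \<omega>' \<and> dH (riem_dist M) M \<Lambda> \<omega> \<Lambda>' \<omega>' \<le> ereal \<epsilon> \<and>
        (\<forall>k\<in>{1..n}. \<sigma>' k \<in> \<Lambda>' \<and> dC0 (riem_dist M) M (\<omega> (\<sigma> k)) (\<omega>' (\<sigma>' k)) \<le> ereal \<epsilon>) \<and>
        (\<forall>k\<le>n. comp_seq \<omega>' \<sigma>' k (x 0) = x k)"
      using H \<sigma>' by (intro exI[of _ "real ` {..<length cs + n}"] exI[of _ "adjoin_maps \<omega> cs H"] exI[of _ \<sigma>'])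
        simp
  qed
qed

theorem mainTheorem6:
  fixes M :: "'a::euclidean_space set" and \<Lambda> :: "'l::metric_space set"
    and \<omega> :: "'l \<Rightarrow> 'a \<Rightarrow> 'a" and \<Delta> :: real
  assumes "compact M" and "smooth_submanifold M"
    and "IFS \<Lambda> M \<omega>"
    and "\<Delta> > 0"
  shows "\<exists>\<delta>>0. \<forall>(n::nat) (x::nat \<Rightarrow> 'a) (\<sigma>::nat \<Rightarrow> 'l).
     (\<forall>k\<le>n. x k \<in> M) \<and> (\<forall>k\<in>{1..n}. \<sigma> k \<in> \<Lambda>) \<and>
     (\<forall>k\<in>{1..n}. riem_dist M (x k) (\<omega> (\<sigma> k) (x (k - 1))) \<le> ereal \<delta>)
     \<longrightarrow> (\<exists>(\<Lambda>'::real set) (\<omega>'::real \<Rightarrow> 'a \<Rightarrow> 'a) (\<sigma>'::nat \<Rightarrow> real).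
           IFS \<Lambda>' M \<omega>' \<and>
           dH (riem_dist M) M \<Lambda> \<omega> \<Lambda>' \<omega>' < ereal \<Delta> \<and>
           (\<forall>k\<in>{1..n}. \<sigma>' k \<in> \<Lambda>' \<and> dC0 (riem_dist M) M (\<omega> (\<sigma> k)) (\<omega>' (\<sigma>' k)) < ereal \<Delta>) \<and>
           (\<forall>k\<le>n. riem_dist M (comp_seq \<omega>' \<sigma>' k (x 0)) (x k) < ereal \<Delta>))"
proof -
  have "\<Delta> / 2 > 0" and less: "\<And>e. e \<le> ereal (\<Delta> / 2) \<Longrightarrow> e < ereal \<Delta>"
    using assms(4) by (auto elim: le_less_trans)
  obtain \<delta> where "\<delta> > 0" and \<delta>: "\<forall>n x \<sigma>. finite_chain M \<Lambda> \<omega> \<delta> n x \<sigma> \<longrightarrow>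
      (\<exists>(\<Lambda>'::real set) \<omega>' \<sigma>'. IFS \<Lambda>' M \<omega>' \<and> dH (riem_dist M) M \<Lambda> \<omega> \<Lambda>' \<omega>' \<le> ereal (\<Delta> / 2) \<and>
         (\<forall>k\<in>{1..n}. \<sigma>' k \<in> \<Lambda>' \<and> dC0 (riem_dist M) M (\<omega> (\<sigma> k)) (\<omega>' (\<sigma>' k)) \<le> ereal (\<Delta> / 2)) \<and>
         (\<forall>k\<le>n. comp_seq \<omega>' \<sigma>' k (x 0) = x k))"
    using chain_is_orbit_of_nearby_IFS[OF assms(1-3) \<open>\<Delta> / 2 > 0\<close>] by blast
  have refl: "riem_dist M y y < ereal \<Delta>" if "y \<in> M" for y
    using riem_dist_self[OF that] assms(4) by (simp add: zero_ereal_def le_less_trans)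
  show ?thesis
  proof (intro exI[of _ \<delta>] conjI allI impI \<open>\<delta> > 0\<close>)
    fix n :: nat and x \<sigma>
    assume chain: "(\<forall>k\<le>n. x k \<in> M) \<and> (\<forall>k\<in>{1..n}. \<sigma> k \<in> \<Lambda>) \<and>
      (\<forall>k\<in>{1..n}. riem_dist M (x k) (\<omega> (\<sigma> k) (x (k - 1))) \<le> ereal \<delta>)"
    then have "finite_chain M \<Lambda> \<omega> \<delta> n x \<sigma>"
      unfolding finite_chain_def .
    then obtain \<Lambda>' \<omega>' and \<sigma>' :: "nat \<Rightarrow> real" where "IFS \<Lambda>' M \<omega>'"
      and "dH (riem_dist M) M \<Lambda> \<omega> \<Lambda>' \<omega>' \<le> ereal (\<Delta> / 2)"
      and "\<forall>k\<in>{1..n}. \<sigma>' k \<in> \<Lambda>' \<and> dC0 (riem_dist M) M (\<omega> (\<sigma> k)) (\<omega>' (\<sigma>' k)) \<le> ereal (\<Delta> / 2)"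
      and "\<forall>k\<le>n. comp_seq \<omega>' \<sigma>' k (x 0) = x k"
      using \<delta>[rule_format, of n x \<sigma>] by blast
    with chain show "\<exists>(\<Lambda>'::real set) \<omega>' \<sigma>'. IFS \<Lambda>' M \<omega>' \<and> dH (riem_dist M) M \<Lambda> \<omega> \<Lambda>' \<omega>' < ereal \<Delta> \<and>
        (\<forall>k\<in>{1..n}. \<sigma>' k \<in> \<Lambda>' \<and> dC0 (riem_dist M) M (\<omega> (\<sigma> k)) (\<omega>' (\<sigma>' k)) < ereal \<Delta>) \<and>
        (\<forall>k\<le>n. riem_dist M (comp_seq \<omega>' \<sigma>' k (x 0)) (x k) < ereal \<Delta>)"
      by (intro exI[of _ \<Lambda>'] exI[of _ \<omega>'] exI[of _ \<sigma>']) (auto intro: less refl)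
  qed
qed

end
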